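(* In the setting described in the context, let $i\in\mathcal V$ satisfy $\sigma_i^2\ge\sigma_j^2$ for every $j\in\mathcal V$, and let $z_{-i}=(z_j)_{j\ne i}$ be such that $\mathcal S(z_{-i})=\{j\ne i: z_j=1\}\ne\emptyset$. Then the following are equivalent: (i) $1\in\mathcal B_i(z_{-i})$; (ii) $\mathcal B_i(z_{-i})=[0,1]$; (iii) for every $z_i\in[0,1)$, writing $z=(z_i,z_{-i})$, there is exactly one node $j\in\mathcal S(z_{-i})$ reachable from $i$ (i.e. to which there is a path from $i$) in the graph $\mathcal G_{W(z)}$, and for this node $\sigma_i^2=\sigma_j^2$.
   Context: Let $n\ge2$ and $\mathcal V=\{1,\dots,n\}$. For a nonnegative $n\times n$ matrix $M$, $\mathcal G_M$ is the directed graph on $\mathcal V$ with edge $(k,l)$ iff $M_{kl}>0$. Let $P$ be a row-stochastic, irreducible, aperiodic matrix ($\mathcal G_P$ strongly connected with gcd of cycle lengths $1$). For $z\in[0,1]^n$, $W(z)=(I-[z])P+[z]$ ($[z]$ the diagonal matrix with diagonal $z$) and $H(z)=\lim_{t\to\infty}W(z)^t$ (the limit exists and is row-stochastic). Let $\sigma_1^2,\dots,\sigma_n^2>0$. Agent $i$'s cost is $\upsilon_i(z)=\sum_jH_{ij}(z)^2\sigma_j^2$, written $\upsilon_i(z_i,z_{-i})$, and her best response set is $\mathcal B_i(z_{-i})=\arg\min_{z_i\in[0,1]}\upsilon_i(z_i,z_{-i})$. *)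

theory Defs
  imports "HOL-Analysis.Analysis"
begin

text \<open>Matrices over a finite index type 'n (playing the role of V = {1..n}).\<close>

primrec matpow :: "real^'n^'n \<Rightarrow> nat \<Rightarrow> real^'n^'n" where
  "matpow M 0 = mat 1"
| "matpow M (Suc t) = matpow M t ** M"

definition diagm :: "real^'n \<Rightarrow> real^'n^'n" where
  "diagm z = (\<chi> k l. if k = l then z $ k else 0)"

definition graph_of :: "real^'n^'n \<Rightarrow> ('n \<times> 'n) set" where
  "graph_of M = {(k, l). M $ k $ l > 0}"

definition row_stochastic :: "real^'n^'n \<Rightarrow> bool" where
  "row_stochastic M \<longleftrightarrow> (\<forall>k l. 0 \<le> M $ k $ l) \<and> (\<forall>k. (\<Sum>l\<in>UNIV. M $ k $ l) = 1)"

definition irreducible_mat :: "real^'n^'n \<Rightarrow> bool" where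
  "irreducible_mat M \<longleftrightarrow> (\<forall>k l. (k, l) \<in> (graph_of M)\<^sup>+)"

definition aperiodic_mat :: "real^'n^'n \<Rightarrow> bool" where
  "aperiodic_mat M \<longleftrightarrow> Gcd {m::nat. m > 0 \<and> (\<exists>k. (k, k) \<in> graph_of M ^^ m)} = 1"

definition Wm :: "real^'n^'n \<Rightarrow> real^'n \<Rightarrow> real^'n^'n" where
  "Wm P z = (mat 1 - diagm z) ** P + diagm z"

definition Hm :: "real^'n^'n \<Rightarrow> real^'n \<Rightarrow> real^'n^'n" where
  "Hm P z = lim (\<lambda>t. matpow (Wm P z) t)"

definition cost :: "real^'n^'n \<Rightarrow> real^'n \<Rightarrow> 'n \<Rightarrow> real^'n \<Rightarrow> real" where
  "cost P sigma2 i z = (\<Sum>j\<in>UNIV. (Hm P z $ i $ j)\<^sup>2 * sigma2 $ j)"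

text \<open>Best response set of agent i to z_{-i} (the i-th entry of z is ignored).\<close>
definition vupd :: "real^'n \<Rightarrow> 'n \<Rightarrow> real \<Rightarrow> real^'n" where
  "vupd z i x = (\<chi> k. if k = i then x else z $ k)"

definition best_response :: "real^'n^'n \<Rightarrow> real^'n \<Rightarrow> 'n \<Rightarrow> real^'n \<Rightarrow> real set" where
  "best_response P sigma2 i z =
     {x \<in> {0..1}. \<forall>y \<in> {0..1}.
        cost P sigma2 i (vupd z i x) \<le> cost P sigma2 i (vupd z i y)}"

definition stubborn_set :: "'n \<Rightarrow> real^'n \<Rightarrow> 'n set" where
  "stubborn_set i z = {j. j \<noteq> i \<and> z $ j = 1}"

end

theory Submission
  imports Defs
begin

(*
  Once some node other than i is fully stubborn, W(z) is the transition matrix of an absorbing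
  Markov chain: the stubborn nodes are absorbing, and since P is irreducible every node can reach
  one of them in G_W(z). The powers of W(z) therefore converge without any use of aperiodicity, and
  row i of the limit H(z) is a probability vector whose support is exactly the set of stubborn
  nodes reachable from i. Consequently
    upsilon_i(z) = sum_j H_ij^2 sigma_j^2 <= sum_j H_ij sigma_i^2 = sigma_i^2,
  with equality iff row i of H(z) is a point mass on a node j with sigma_j^2 = sigma_i^2.
  At z_i = 1 the node i is itself absorbing, so upsilon_i = sigma_i^2 is the maximal cost; hence 1
  is a best response iff the cost does not depend on z_i, iff every z_i is a best response, iff
  equality holds for every z_i < 1.
*)

section \<open>Powers of nonnegative matrices\<close>

lemma matpow_add: "matpow W (s + t) = matpow W s ** matpow W t"
  by (induction t) (simp_all add: matrix_mul_assoc)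

lemma matrix_mult_entry_ge_term:
  fixes A B :: "real^'n^'n"
  assumes "\<forall>k l. 0 \<le> A $ k $ l" and "\<forall>k l. 0 \<le> B $ k $ l"
  shows "A $ k $ m * B $ m $ l \<le> (A ** B) $ k $ l"
proof -
  have "A $ k $ m * B $ m $ l \<le> (\<Sum>m'\<in>UNIV. A $ k $ m' * B $ m' $ l)"
    by (rule member_le_sum) (use assms in auto)
  then show ?thesis by (simp add: matrix_matrix_mult_def)
qed

lemma matpow_nonneg:
  assumes "\<forall>k l. 0 \<le> W $ k $ l"
  shows "0 \<le> matpow W t $ k $ l"
proof (induction t arbitrary: l)
  case 0
  then show ?case by (simp add: mat_def)
next
  case (Suc t)
  then show ?case using assms by (simp add: matrix_matrix_mult_def sum_nonneg)
qed

lemma row_stochastic_mult: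
  assumes "row_stochastic A" and "row_stochastic B"
  shows "row_stochastic (A ** B)"
proof -
  have "(\<Sum>l\<in>UNIV. (A ** B) $ k $ l) = 1" for k
  proof -
    have "(\<Sum>l\<in>UNIV. (A ** B) $ k $ l) = (\<Sum>l\<in>UNIV. \<Sum>m\<in>UNIV. A $ k $ m * B $ m $ l)"
      by (simp add: matrix_matrix_mult_def)
    also have "\<dots> = (\<Sum>m\<in>UNIV. A $ k $ m * (\<Sum>l\<in>UNIV. B $ m $ l))"
      by (subst sum.swap) (simp add: sum_distrib_left)
    also have "\<dots> = 1"
      using assms by (simp add: row_stochastic_def)
    finally show ?thesis .
  qed
  then show ?thesis
    using assms by (auto simp: row_stochastic_def matrix_matrix_mult_def sum_nonneg)
qed

lemma row_stochastic_matpow: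
  assumes "row_stochastic W"
  shows "row_stochastic (matpow W t)"
proof (induction t)
  case 0
  show ?case by (simp add: row_stochastic_def mat_def)
next
  case (Suc t)
  then show ?case using assms by (simp add: row_stochastic_mult)
qed

lemma row_stochastic_entry_le_1:
  assumes "row_stochastic M"
  shows "M $ k $ l \<le> 1"
proof -
  have "M $ k $ l \<le> (\<Sum>l\<in>UNIV. M $ k $ l)"
    using assms by (intro member_le_sum) (auto simp: row_stochastic_def)
  then show ?thesis using assms by (simp add: row_stochastic_def)
qed

lemma matpow_pos_imp_rtrancl:
  fixes W :: "real^'n^'n"
  assumes nonneg: "\<forall>k l. 0 \<le> W $ k $ l" and "0 < matpow W t $ k $ l"
  shows "(k, l) \<in> (graph_of W)\<^sup>*"
  using assms(2)
proof (induction t arbitrary: l)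
  case 0
  then show ?case by (simp add: mat_def split: if_splits)
next
  case (Suc t)
  have "\<exists>m. 0 < matpow W t $ k $ m * W $ m $ l"
  proof (rule ccontr)
    assume "\<nexists>m. 0 < matpow W t $ k $ m * W $ m $ l"
    then have "matpow W (Suc t) $ k $ l \<le> 0"
      by (simp add: matrix_matrix_mult_def not_less sum_nonpos)
    with Suc.prems show False by simp
  qed
  then obtain m where "0 < matpow W t $ k $ m * W $ m $ l" ..
  then have "0 < matpow W t $ k $ m" and "(m, l) \<in> graph_of W"
    using matpow_nonneg[OF nonneg, of t k m] nonneg
    by (auto simp: zero_less_mult_iff graph_of_def)
  then show ?case using Suc.IH by (blast intro: rtrancl_into_rtrancl)
qed

lemma rtrancl_imp_matpow_pos:
  fixes W :: "real^'n^'n"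
  assumes nonneg: "\<forall>k l. 0 \<le> W $ k $ l" and "(k, l) \<in> (graph_of W)\<^sup>*"
  shows "\<exists>t. 0 < matpow W t $ k $ l"
  using assms(2)
proof (induction rule: rtrancl_induct)
  case base
  have "0 < matpow W 0 $ k $ k" by (simp add: mat_def)
  then show ?case by blast
next
  case (step l l')
  then obtain t where "0 < matpow W t $ k $ l" by blast
  moreover have "0 < W $ l $ l'" using step(2) by (simp add: graph_of_def)
  ultimately have "0 < matpow W t $ k $ l * W $ l $ l'" by simp
  also have "\<dots> \<le> matpow W (Suc t) $ k $ l'"
    using matrix_mult_entry_ge_term[of "matpow W t" W] matpow_nonneg[OF nonneg] nonneg by simp
  finally show ?case by blast
qed

lemma matpow_pos_iff_rtrancl:
  fixes W :: "real^'n^'n"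
  assumes "\<forall>k l. 0 \<le> W $ k $ l"
  shows "(\<exists>t. 0 < matpow W t $ k $ l) \<longleftrightarrow> (k, l) \<in> (graph_of W)\<^sup>*"
  using matpow_pos_imp_rtrancl[OF assms] rtrancl_imp_matpow_pos[OF assms] by blast

section \<open>Absorbing chains\<close>

locale absorbing_chain =
  fixes W :: "real^'n^'n" and A :: "'n set"
  assumes stochastic: "row_stochastic W"
    and absorbing_row: "\<And>a l. a \<in> A \<Longrightarrow> W $ a $ l = (if l = a then 1 else 0)"
    and reaches_absorbing: "\<And>k. \<exists>a\<in>A. (k, a) \<in> (graph_of W)\<^sup>*"
begin

lemma nonneg: "\<forall>k l. 0 \<le> W $ k $ l"
  using stochastic by (simp add: row_stochastic_def)

lemma matpow_stochastic: "row_stochastic (matpow W t)"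
  by (rule row_stochastic_matpow[OF stochastic])

lemma matpow_absorbing_row: "a \<in> A \<Longrightarrow> matpow W t $ a $ l = (if l = a then 1 else 0)"
proof (induction t arbitrary: l)
  case 0
  then show ?case by (simp add: mat_def)
next
  case (Suc t)
  have "matpow W (Suc t) $ a $ l = (\<Sum>m\<in>UNIV. matpow W t $ a $ m * W $ m $ l)"
    by (simp add: matrix_matrix_mult_def)
  also have "\<dots> = (\<Sum>m\<in>UNIV. if m = a then W $ a $ l else 0)"
    using Suc by (intro sum.cong) auto
  finally show ?case using Suc.prems by (simp add: absorbing_row)
qed

lemma incseq_matpow_absorbing: "a \<in> A \<Longrightarrow> incseq (\<lambda>t. matpow W t $ k $ a)"
  using matrix_mult_entry_ge_term[of "matpow W t" W k a a for t] matpow_nonneg[OF nonneg] nonneg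
  by (intro incseq_SucI) (simp add: absorbing_row)

definition transient_mass :: "nat \<Rightarrow> 'n \<Rightarrow> real" where
  "transient_mass t k = (\<Sum>l\<in>-A. matpow W t $ k $ l)"

lemma transient_mass_nonneg: "0 \<le> transient_mass t k"
  unfolding transient_mass_def using matpow_nonneg[OF nonneg] by (simp add: sum_nonneg)

lemma transient_mass_absorbing: "a \<in> A \<Longrightarrow> transient_mass t a = 0"
  unfolding transient_mass_def by (intro sum.neutral) (auto simp: matpow_absorbing_row)

lemma matpow_le_transient_mass: "l \<notin> A \<Longrightarrow> matpow W t $ k $ l \<le> transient_mass t k"
  unfolding transient_mass_def using matpow_nonneg[OF nonneg] by (intro member_le_sum) auto

lemma transient_mass_0: "transient_mass 0 k = (if k \<in> A then 0 else 1)"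
  by (simp add: transient_mass_absorbing) (simp add: transient_mass_def mat_def)

lemma transient_mass_add:
  "transient_mass (s + t) k = (\<Sum>m\<in>UNIV. matpow W s $ k $ m * transient_mass t m)"
proof -
  have "transient_mass (s + t) k = (\<Sum>l\<in>-A. \<Sum>m\<in>UNIV. matpow W s $ k $ m * matpow W t $ m $ l)"
    by (simp add: transient_mass_def matpow_add matrix_matrix_mult_def)
  also have "\<dots> = (\<Sum>m\<in>UNIV. matpow W s $ k $ m * transient_mass t m)"
    by (subst sum.swap) (simp add: transient_mass_def sum_distrib_left)
  finally show ?thesis .
qed

lemma transient_mass_le_1: "transient_mass t k \<le> 1"
proof -
  have "transient_mass t k \<le> (\<Sum>l\<in>UNIV. matpow W t $ k $ l)"
    unfolding transient_mass_def using matpow_nonneg[OF nonneg]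
    by (intro sum_mono2) auto
  then show ?thesis using matpow_stochastic by (simp add: row_stochastic_def)
qed

lemma transient_mass_Suc_le: "transient_mass (Suc t) k \<le> transient_mass t k"
proof -
  have "transient_mass 1 m \<le> transient_mass 0 m" for m
    by (cases "m \<in> A") (simp_all add: transient_mass_absorbing transient_mass_0 transient_mass_le_1)
  then have "(\<Sum>m\<in>UNIV. matpow W t $ k $ m * transient_mass 1 m)
      \<le> (\<Sum>m\<in>UNIV. matpow W t $ k $ m * transient_mass 0 m)"
    using matpow_nonneg[OF nonneg] by (intro sum_mono mult_left_mono) auto
  then show ?thesis
    using transient_mass_add[of t 1 k] transient_mass_add[of t 0 k] by simp
qed

lemma transient_mass_less_1:
  assumes "a \<in> A" and "0 < matpow W t $ k $ a"
  shows "transient_mass t k < 1"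
proof -
  have "transient_mass t k + matpow W t $ k $ a = (\<Sum>l\<in>insert a (-A). matpow W t $ k $ l)"
    using assms(1) by (simp add: transient_mass_def)
  also have "\<dots> \<le> (\<Sum>l\<in>UNIV. matpow W t $ k $ l)"
    using matpow_nonneg[OF nonneg] by (intro sum_mono2) auto
  also have "\<dots> = 1"
    using matpow_stochastic by (simp add: row_stochastic_def)
  finally show ?thesis using assms(2) by simp
qed

lemma transient_mass_convergent: "convergent (\<lambda>t. transient_mass t k)"
proof -
  have "decseq (\<lambda>t. transient_mass t k)"
    by (rule decseq_SucI) (rule transient_mass_Suc_le)
  then show ?thesis
    using transient_mass_nonneg by (blast intro: decseq_convergent convergentI)
qed

lemma transient_mass_limit_invariant:
  assumes "\<And>k. (\<lambda>t. transient_mass t k) \<longlonglongrightarrow> m k"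
  shows "m k = (\<Sum>l\<in>UNIV. matpow W s $ k $ l * m l)"
proof -
  have "(\<lambda>t. transient_mass (s + t) k) \<longlonglongrightarrow> m k"
    using LIMSEQ_ignore_initial_segment[OF assms[of k], of s] by (simp add: add.commute)
  moreover have "(\<lambda>t. transient_mass (s + t) k) \<longlonglongrightarrow> (\<Sum>l\<in>UNIV. matpow W s $ k $ l * m l)"
    unfolding transient_mass_add by (intro tendsto_intros assms)
  ultimately show ?thesis
    by (rule LIMSEQ_unique)
qed

text \<open>At a maximiser \<open>k\<^sub>0\<close> of the limit \<open>m\<close>, some power of \<open>W\<close> moves positive weight
  from \<open>k\<^sub>0\<close> to an absorbing state, where \<open>m\<close> vanishes; by the invariance \<open>m = W\<^sup>s m\<close>
  this forces \<open>max m = 0\<close>.\<close>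

lemma transient_mass_tendsto_0: "(\<lambda>t. transient_mass t k) \<longlonglongrightarrow> 0"
proof -
  define m where "m k = lim (\<lambda>t. transient_mass t k)" for k
  have m: "(\<lambda>t. transient_mass t k) \<longlonglongrightarrow> m k" for k
    unfolding m_def using transient_mass_convergent by (simp add: convergent_LIMSEQ_iff)
  have m_nonneg: "0 \<le> m k" for k
    by (rule LIMSEQ_le_const[OF m]) (simp add: transient_mass_nonneg)
  have m_absorbing: "m a = 0" if "a \<in> A" for a
    using m[of a] that by (simp add: transient_mass_absorbing LIMSEQ_const_iff)
  have "Max (range m) \<in> range m"
    by (intro Max_in) auto
  then obtain k0 where k0_max: "Max (range m) = m k0"
    by (rule rangeE)
  have k0: "m k \<le> m k0" for k
    unfolding k0_max[symmetric] by (intro Max_ge) auto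
  obtain a where a: "a \<in> A" "(k0, a) \<in> (graph_of W)\<^sup>*"
    using reaches_absorbing by blast
  then obtain s where s: "0 < matpow W s $ k0 $ a"
    using matpow_pos_iff_rtrancl[OF nonneg] by blast
  have "m k0 = (\<Sum>l\<in>UNIV. matpow W s $ k0 $ l * m l)"
    using m by (rule transient_mass_limit_invariant)
  also have "\<dots> \<le> (\<Sum>l\<in>UNIV. matpow W s $ k0 $ l * (transient_mass 0 l * m k0))"
    using matpow_nonneg[OF nonneg] k0
    by (intro sum_mono mult_left_mono) (auto simp: transient_mass_0 m_absorbing)
  also have "\<dots> = transient_mass s k0 * m k0"
    using transient_mass_add[of s 0 k0] by (simp add: sum_distrib_right mult.assoc)
  finally have "m k0 \<le> transient_mass s k0 * m k0" .
  with transient_mass_less_1[OF a(1) s] m_nonneg[of k0] have "m k0 = 0"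
    by (simp add: mult_le_cancel_right1 not_le)
  with k0[of k] m_nonneg[of k] m[of k] show ?thesis
    by simp
qed

lemma matpow_transient_tendsto_0: "l \<notin> A \<Longrightarrow> (\<lambda>t. matpow W t $ k $ l) \<longlonglongrightarrow> 0"
  by (rule tendsto_sandwich[OF _ _ tendsto_const transient_mass_tendsto_0[of k]])
    (simp_all add: matpow_nonneg[OF nonneg] matpow_le_transient_mass)

lemma matpow_convergent: "convergent (matpow W)"
proof -
  have "convergent (\<lambda>t. matpow W t $ k $ l)" for k l
  proof (cases "l \<in> A")
    case True
    then show ?thesis
      using incseq_matpow_absorbing row_stochastic_entry_le_1[OF matpow_stochastic]
      by (blast intro: incseq_convergent convergentI)
  next
    case False
    then show ?thesis using matpow_transient_tendsto_0 by (blast intro: convergentI)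
  qed
  then have "matpow W \<longlonglongrightarrow> (\<chi> k l. lim (\<lambda>t. matpow W t $ k $ l))"
    by (intro vec_tendstoI) (simp add: convergent_LIMSEQ_iff)
  then show ?thesis by (rule convergentI)
qed

lemma matpow_entry_tendsto_lim: "(\<lambda>t. matpow W t $ k $ l) \<longlonglongrightarrow> lim (matpow W) $ k $ l"
  using matpow_convergent by (intro tendsto_vec_nth) (simp add: convergent_LIMSEQ_iff)

lemma lim_matpow_stochastic: "row_stochastic (lim (matpow W))"
proof -
  have "0 \<le> lim (matpow W) $ k $ l" for k l
    by (rule LIMSEQ_le_const[OF matpow_entry_tendsto_lim]) (simp add: matpow_nonneg[OF nonneg])
  moreover have "(\<Sum>l\<in>UNIV. lim (matpow W) $ k $ l) = 1" for k
  proof -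
    have "(\<lambda>t. \<Sum>l\<in>UNIV. matpow W t $ k $ l) \<longlonglongrightarrow> (\<Sum>l\<in>UNIV. lim (matpow W) $ k $ l)"
      by (intro tendsto_intros matpow_entry_tendsto_lim)
    then show ?thesis
      using matpow_stochastic by (simp add: row_stochastic_def LIMSEQ_const_iff)
  qed
  ultimately show ?thesis by (simp add: row_stochastic_def)
qed

lemma lim_matpow_transient: "l \<notin> A \<Longrightarrow> lim (matpow W) $ k $ l = 0"
  using matpow_entry_tendsto_lim matpow_transient_tendsto_0 LIMSEQ_unique by blast

lemma lim_matpow_absorbing_row: "a \<in> A \<Longrightarrow> lim (matpow W) $ a $ l = (if l = a then 1 else 0)"
  using matpow_entry_tendsto_lim[of a l] by (simp add: matpow_absorbing_row LIMSEQ_const_iff)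

lemma lim_matpow_pos_iff_rtrancl:
  assumes "a \<in> A"
  shows "0 < lim (matpow W) $ k $ a \<longleftrightarrow> (k, a) \<in> (graph_of W)\<^sup>*"
proof -
  have "0 < lim (matpow W) $ k $ a \<longleftrightarrow> (\<exists>t. 0 < matpow W t $ k $ a)"
  proof
    assume pos: "0 < lim (matpow W) $ k $ a"
    show "\<exists>t. 0 < matpow W t $ k $ a"
    proof (rule ccontr)
      assume "\<nexists>t. 0 < matpow W t $ k $ a"
      then have "lim (matpow W) $ k $ a \<le> 0"
        by (intro LIMSEQ_le_const2[OF matpow_entry_tendsto_lim]) (auto simp: not_less)
      with pos show False by simp
    qed
  next
    assume "\<exists>t. 0 < matpow W t $ k $ a"
    then show "0 < lim (matpow W) $ k $ a"
      using incseq_le[OF incseq_matpow_absorbing[OF assms] matpow_entry_tendsto_lim]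
      by (fastforce intro: less_le_trans)
  qed
  then show ?thesis using matpow_pos_iff_rtrancl[OF nonneg] by simp
qed

end

section \<open>The dynamics \<open>W(z)\<close> with a stubborn node\<close>

lemma Wm_entry: "Wm P z $ k $ l = (1 - z $ k) * P $ k $ l + (if k = l then z $ k else 0)"
proof -
  have "((mat 1 - diagm z) ** P) $ k $ l = (\<Sum>m\<in>UNIV. (if k = m then 1 - z $ k else 0) * P $ m $ l)"
    by (simp add: matrix_matrix_mult_def diagm_def mat_def if_distrib[of "\<lambda>x. x - _"] cong: if_cong)
  also have "\<dots> = (\<Sum>m\<in>UNIV. if k = m then (1 - z $ k) * P $ m $ l else 0)"
    by (intro sum.cong) auto
  finally show ?thesis
    by (simp add: Wm_def diagm_def)
qed

lemma row_stochastic_Wm: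
  assumes "row_stochastic P" and "\<forall>k. 0 \<le> z $ k \<and> z $ k \<le> 1"
  shows "row_stochastic (Wm P z)"
proof -
  have "(\<Sum>l\<in>UNIV. Wm P z $ k $ l) = (1 - z $ k) * (\<Sum>l\<in>UNIV. P $ k $ l) + z $ k" for k
    by (simp add: Wm_entry sum.distrib sum_distrib_left)
  then show ?thesis
    using assms by (simp add: row_stochastic_def Wm_entry)
qed

lemma Wm_reaches_stubborn:
  assumes "\<forall>k. 0 \<le> z $ k \<and> z $ k \<le> 1" and "(k, a) \<in> (graph_of P)\<^sup>*" and "z $ a = 1"
  shows "\<exists>b. z $ b = 1 \<and> (k, b) \<in> (graph_of (Wm P z))\<^sup>*"
  using assms(2,3)
proof (induction rule: converse_rtrancl_induct)
  case base
  then show ?case by blast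
next
  case (step k k')
  show ?case
  proof (cases "z $ k = 1")
    case True
    then show ?thesis by blast
  next
    case False
    then have "z $ k < 1" using assms(1) by (simp add: less_le)
    moreover have "0 < P $ k $ k'" using step(1) by (simp add: graph_of_def)
    ultimately have "(k, k') \<in> graph_of (Wm P z)"
      using assms(1) by (simp add: graph_of_def Wm_entry add_pos_nonneg)
    with step.IH[OF step.prems] show ?thesis
      by (blast intro: converse_rtrancl_into_rtrancl)
  qed
qed

lemma absorbing_chain_Wm:
  assumes "row_stochastic P" and "irreducible_mat P"
    and "\<forall>k. 0 \<le> z $ k \<and> z $ k \<le> 1" and "z $ a = 1"
  shows "absorbing_chain (Wm P z) {k. z $ k = 1}"
proof
  show "row_stochastic (Wm P z)"
    using assms(1,3) by (rule row_stochastic_Wm)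
  show "Wm P z $ b $ l = (if l = b then 1 else 0)" if "b \<in> {k. z $ k = 1}" for b l
    using that by (simp add: Wm_entry)
  show "\<exists>b\<in>{k. z $ k = 1}. (k, b) \<in> (graph_of (Wm P z))\<^sup>*" for k
  proof -
    have "(k, a) \<in> (graph_of P)\<^sup>*"
      using assms(2) by (simp add: irreducible_mat_def trancl_into_rtrancl)
    then show ?thesis using Wm_reaches_stubborn[OF assms(3) _ assms(4)] by blast
  qed
qed

context
  fixes P :: "real^'n^'n" and z :: "real^'n" and a :: 'n
  assumes stoch: "row_stochastic P" and irred: "irreducible_mat P"
    and z_range: "\<forall>k. 0 \<le> z $ k \<and> z $ k \<le> 1" and stubborn: "z $ a = 1"
begin

interpretation absorbing_chain "Wm P z" "{k. z $ k = 1}"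
  using stoch irred z_range stubborn by (rule absorbing_chain_Wm)

lemma row_stochastic_Hm: "row_stochastic (Hm P z)"
  unfolding Hm_def by (rule lim_matpow_stochastic)

lemma Hm_stubborn_row: "z $ b = 1 \<Longrightarrow> Hm P z $ b $ l = (if l = b then 1 else 0)"
  unfolding Hm_def by (simp add: lim_matpow_absorbing_row)

lemma Hm_pos_iff: "0 < Hm P z $ k $ l \<longleftrightarrow> z $ l = 1 \<and> (k, l) \<in> (graph_of (Wm P z))\<^sup>*"
  unfolding Hm_def using lim_matpow_pos_iff_rtrancl lim_matpow_transient by fastforce

end

section \<open>Costs and best responses\<close>

lemma weighted_square_le:
  fixes h s c :: real
  assumes "0 \<le> h" "h \<le> 1" "0 \<le> s" "s \<le> c"
  shows "h\<^sup>2 * s \<le> h * c"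
proof -
  have "h\<^sup>2 * s \<le> h * s"
    using assms by (simp add: power2_eq_square mult_right_le_one_le mult_right_mono)
  also have "\<dots> \<le> h * c"
    using assms by (simp add: mult_left_mono)
  finally show ?thesis .
qed

lemma sum_squares_weighted_le:
  fixes h s :: "'a::finite \<Rightarrow> real"
  assumes "\<forall>j. 0 \<le> h j" and "(\<Sum>j\<in>UNIV. h j) = 1" and "\<forall>j. 0 \<le> s j \<and> s j \<le> c"
  shows "(\<Sum>j\<in>UNIV. (h j)\<^sup>2 * s j) \<le> c"
proof -
  have "(\<Sum>j\<in>UNIV. (h j)\<^sup>2 * s j) \<le> (\<Sum>j\<in>UNIV. h j * c)"
    using assms member_le_sum[of _ UNIV h]
    by (intro sum_mono weighted_square_le) auto
  also have "\<dots> = c"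
    using assms(2) by (simp add: sum_distrib_right[symmetric])
  finally show ?thesis .
qed

lemma weighted_square_eq_iff:
  fixes h s c :: real
  assumes "0 < h" "h \<le> 1" "0 \<le> s" "s \<le> c" "0 < c"
  shows "h\<^sup>2 * s = h * c \<longleftrightarrow> h = 1 \<and> s = c"
proof
  assume "h\<^sup>2 * s = h * c"
  then have hs: "h * s = c"
    using assms(1) by (simp add: power2_eq_square mult.assoc)
  moreover have "h * s \<le> s"
    using assms by (simp add: mult_left_le_one_le)
  ultimately have "s = c"
    using assms(4) by linarith
  with hs assms(5) show "h = 1 \<and> s = c"
    by simp
qed (simp add: power2_eq_square)

lemma point_mass_iff_unique_support:
  fixes h :: "'a::finite \<Rightarrow> real"
  assumes h_nonneg: "\<forall>j. 0 \<le> h j" and h_sum: "(\<Sum>j\<in>UNIV. h j) = 1"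
  shows "(\<forall>j. 0 < h j \<longrightarrow> h j = 1 \<and> Q j) \<longleftrightarrow> (\<exists>!j. 0 < h j) \<and> (\<forall>j. 0 < h j \<longrightarrow> Q j)"
proof
  assume unit: "\<forall>j. 0 < h j \<longrightarrow> h j = 1 \<and> Q j"
  have "\<not> (\<forall>j. h j = 0)"
    using h_sum by (metis sum.neutral zero_neq_one)
  then obtain j0 where "0 < h j0"
    using h_nonneg less_eq_real_def by auto
  moreover have "j = j0" if "0 < h j" and "0 < h j0" for j
  proof (rule ccontr)
    assume "j \<noteq> j0"
    then have "h j + h j0 \<le> (\<Sum>j\<in>UNIV. h j)"
      using sum_mono2[of UNIV "{j, j0}" h] h_nonneg by simp
    with unit that h_sum show False by force
  qed
  ultimately show "(\<exists>!j. 0 < h j) \<and> (\<forall>j. 0 < h j \<longrightarrow> Q j)"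
    using unit by blast
next
  assume "(\<exists>!j. 0 < h j) \<and> (\<forall>j. 0 < h j \<longrightarrow> Q j)"
  then obtain j0 where j0: "0 < h j0" "\<And>j. 0 < h j \<Longrightarrow> j = j0"
    and Q: "\<forall>j. 0 < h j \<longrightarrow> Q j"
    by blast
  have "h j = 0" if "j \<noteq> j0" for j
    using h_nonneg[rule_format, of j] j0(2)[of j] that by linarith
  then have "(\<Sum>j\<in>UNIV. h j) = (\<Sum>j\<in>UNIV. if j = j0 then h j0 else 0)"
    by (intro sum.cong) auto
  then have "h j0 = 1"
    using h_sum by simp
  then show "\<forall>j. 0 < h j \<longrightarrow> h j = 1 \<and> Q j"
    using j0(2) Q by blast
qed

lemma sum_squares_weighted_ge_iff:
  fixes h s :: "'a::finite \<Rightarrow> real"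
  assumes h_nonneg: "\<forall>j. 0 \<le> h j" and h_sum: "(\<Sum>j\<in>UNIV. h j) = 1"
    and s_bounds: "\<forall>j. 0 \<le> s j \<and> s j \<le> c" and c_pos: "0 < c"
  shows "c \<le> (\<Sum>j\<in>UNIV. (h j)\<^sup>2 * s j) \<longleftrightarrow> (\<exists>!j. 0 < h j) \<and> (\<forall>j. 0 < h j \<longrightarrow> s j = c)"
proof -
  define gap where "gap j = h j * c - (h j)\<^sup>2 * s j" for j
  have h_le_1: "h j \<le> 1" for j
    using h_sum h_nonneg member_le_sum[of j UNIV h] by simp
  have gap_nonneg: "0 \<le> gap j" for j
    using weighted_square_le h_nonneg h_le_1 s_bounds by (simp add: gap_def)
  have gap_eq_0_iff: "gap j = 0 \<longleftrightarrow> (0 < h j \<longrightarrow> h j = 1 \<and> s j = c)" for j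
    using weighted_square_eq_iff[of "h j" "s j" c] h_nonneg h_le_1 s_bounds c_pos
    by (cases "h j = 0") (auto simp: gap_def less_le)
  have "(\<Sum>j\<in>UNIV. gap j) = c - (\<Sum>j\<in>UNIV. (h j)\<^sup>2 * s j)"
    using h_sum by (simp add: gap_def sum_subtractf sum_distrib_right[symmetric])
  then have "c \<le> (\<Sum>j\<in>UNIV. (h j)\<^sup>2 * s j) \<longleftrightarrow> (\<Sum>j\<in>UNIV. gap j) = 0"
    using sum_nonneg[of UNIV gap, OF gap_nonneg] by linarith
  also have "\<dots> \<longleftrightarrow> (\<forall>j. 0 < h j \<longrightarrow> h j = 1 \<and> s j = c)"
    by (simp add: sum_nonneg_eq_0_iff gap_nonneg gap_eq_0_iff)
  also have "\<dots> \<longleftrightarrow> (\<exists>!j. 0 < h j) \<and> (\<forall>j. 0 < h j \<longrightarrow> s j = c)"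
    using h_nonneg h_sum by (rule point_mass_iff_unique_support)
  finally show ?thesis .
qed

lemma cost_stubborn_self:
  assumes "row_stochastic P" and "irreducible_mat P"
    and "\<forall>k. 0 \<le> z $ k \<and> z $ k \<le> 1" and "z $ i = 1"
  shows "cost P sigma2 i z = sigma2 $ i"
proof -
  have "cost P sigma2 i z = (\<Sum>j\<in>UNIV. if j = i then sigma2 $ i else 0)"
    unfolding cost_def using Hm_stubborn_row[OF assms assms(4)] by (intro sum.cong) auto
  then show ?thesis by simp
qed

lemma cost_le_max_variance:
  assumes "row_stochastic P" and "irreducible_mat P"
    and "\<forall>k. 0 \<le> z $ k \<and> z $ k \<le> 1" and "z $ a = 1"
    and "\<forall>j. 0 \<le> sigma2 $ j \<and> sigma2 $ j \<le> sigma2 $ i"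
  shows "cost P sigma2 i z \<le> sigma2 $ i"
  unfolding cost_def using row_stochastic_Hm[OF assms(1-4)] assms(5)
  by (intro sum_squares_weighted_le) (auto simp: row_stochastic_def)

lemma max_variance_le_cost_iff:
  assumes "row_stochastic P" and "irreducible_mat P"
    and "\<forall>k. 0 \<le> z $ k \<and> z $ k \<le> 1" and "z $ a = 1"
    and "\<forall>j. 0 \<le> sigma2 $ j \<and> sigma2 $ j \<le> sigma2 $ i" and "0 < sigma2 $ i"
  shows "sigma2 $ i \<le> cost P sigma2 i z \<longleftrightarrow>
    (\<exists>!j. z $ j = 1 \<and> (i, j) \<in> (graph_of (Wm P z))\<^sup>*)
    \<and> (\<forall>j. z $ j = 1 \<and> (i, j) \<in> (graph_of (Wm P z))\<^sup>* \<longrightarrow> sigma2 $ i = sigma2 $ j)"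
proof -
  have "sigma2 $ i \<le> cost P sigma2 i z \<longleftrightarrow>
    (\<exists>!j. 0 < Hm P z $ i $ j) \<and> (\<forall>j. 0 < Hm P z $ i $ j \<longrightarrow> sigma2 $ j = sigma2 $ i)"
    unfolding cost_def using row_stochastic_Hm[OF assms(1-4)] assms(5,6)
    by (intro sum_squares_weighted_ge_iff) (auto simp: row_stochastic_def)
  then show ?thesis
    by (auto simp: Hm_pos_iff[OF assms(1-4)])
qed

lemma minimizers_eq_iff_maximizer_minimizes:
  fixes f :: "'a \<Rightarrow> 'b::linorder"
  assumes "x0 \<in> X" and "\<forall>x\<in>X. f x \<le> f x0"
  shows "{x\<in>X. \<forall>y\<in>X. f x \<le> f y} = X \<longleftrightarrow> x0 \<in> {x\<in>X. \<forall>y\<in>X. f x \<le> f y}"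
  using assms by (auto intro: order_trans)

lemma vupd_unit_cube:
  assumes "\<forall>j. j \<noteq> i \<longrightarrow> 0 \<le> z $ j \<and> z $ j \<le> 1" and "x \<in> {0..1}"
  shows "\<forall>k. 0 \<le> vupd z i x $ k \<and> vupd z i x $ k \<le> 1"
  using assms by (simp add: vupd_def)

lemma vupd_stubborn: "a \<in> stubborn_set i z \<Longrightarrow> vupd z i x $ a = 1"
  by (simp add: stubborn_set_def vupd_def)

lemma vupd_eq_1_iff: "x < 1 \<Longrightarrow> vupd z i x $ j = 1 \<longleftrightarrow> j \<in> stubborn_set i z"
  by (auto simp: vupd_def stubborn_set_def)

theorem proposition5:
  fixes P :: "real^'n^'n" and sigma2 :: "real^'n" and i :: 'n and z :: "real^'n"
  assumes n2: "CARD('n) \<ge> 2"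
    and stoch: "row_stochastic P"
    and irred: "irreducible_mat P"
    and aper: "aperiodic_mat P"
    and sig_pos: "\<forall>j. sigma2 $ j > 0"
    and sig_max: "\<forall>j. sigma2 $ i \<ge> sigma2 $ j"
    and z_range: "\<forall>j. j \<noteq> i \<longrightarrow> 0 \<le> z $ j \<and> z $ j \<le> 1"
    and S_ne: "stubborn_set i z \<noteq> {}"
  shows "(1 \<in> best_response P sigma2 i z
           \<longleftrightarrow> best_response P sigma2 i z = {0..1})
       \<and> (best_response P sigma2 i z = {0..1}
           \<longleftrightarrow> (\<forall>zi. 0 \<le> zi \<and> zi < 1 \<longrightarrow>
                (\<exists>!j. j \<in> stubborn_set i z \<and> (i, j) \<in> (graph_of (Wm P (vupd z i zi)))\<^sup>*)
              \<and> (\<forall>j. j \<in> stubborn_set i z \<and> (i, j) \<in> (graph_of (Wm P (vupd z i zi)))\<^sup>*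
                     \<longrightarrow> sigma2 $ i = sigma2 $ j)))"
proof -
  define c where "c x = cost P sigma2 i (vupd z i x)" for x
  obtain a where a: "a \<in> stubborn_set i z"
    using S_ne by blast
  have sigma2_bounds: "\<forall>j. 0 \<le> sigma2 $ j \<and> sigma2 $ j \<le> sigma2 $ i"
    using sig_pos sig_max less_imp_le by blast
  note z_x = vupd_unit_cube[OF z_range] and a_x = vupd_stubborn[OF a]
  have c_1: "c 1 = sigma2 $ i"
    unfolding c_def using z_x[of 1] by (intro cost_stubborn_self[OF stoch irred]) (auto simp: vupd_def)
  have c_le: "\<forall>x\<in>{0..1}. c x \<le> c 1"
    using c_1 cost_le_max_variance[OF stoch irred z_x a_x sigma2_bounds] by (simp add: c_def)
  have c_ge_iff: "c 1 \<le> c x \<longleftrightarrow>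
      (\<exists>!j. j \<in> stubborn_set i z \<and> (i, j) \<in> (graph_of (Wm P (vupd z i x)))\<^sup>*)
      \<and> (\<forall>j. j \<in> stubborn_set i z \<and> (i, j) \<in> (graph_of (Wm P (vupd z i x)))\<^sup>*
             \<longrightarrow> sigma2 $ i = sigma2 $ j)" if "0 \<le> x" "x < 1" for x
    using c_1 that max_variance_le_cost_iff[OF stoch irred z_x[of x] a_x sigma2_bounds]
      sig_pos vupd_eq_1_iff[of x z i]
    by (simp add: c_def)
  have best_response_c: "best_response P sigma2 i z = {x\<in>{0..1}. \<forall>y\<in>{0..1}. c x \<le> c y}"
    by (simp add: best_response_def c_def)
  have "best_response P sigma2 i z = {0..1} \<longleftrightarrow> 1 \<in> best_response P sigma2 i z"
    unfolding best_response_c using c_le by (intro minimizers_eq_iff_maximizer_minimizes) auto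
  moreover have "1 \<in> best_response P sigma2 i z \<longleftrightarrow> (\<forall>x. 0 \<le> x \<and> x < 1 \<longrightarrow> c 1 \<le> c x)"
    unfolding best_response_c by (auto simp: le_less)
  ultimately show ?thesis
    using c_ge_iff by auto
qed

end
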